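(* Let $K$ be any field with involution, and let $T=L_K(E_T)$ be the Toeplitz algebra, where $E_T$ is the graph with two vertices $u,v$, one loop at $v$, and one edge from $v$ to $u$. Then $T$ is not $*$-symmetric, and for every integer $n>1$ the ring $\mathbb M_n(T)$ (a Rickart ring, being the Leavitt path algebra of a graph with finitely many vertices) is not a Rickart $*$-ring.
   Context: $L_K(E_T)$ is generated by $u,v,c,f,c^*,f^*$ ($c$ the loop at $v$, $f$ the edge $v\to u$) subject to the Leavitt path algebra relations: $u,v$ orthogonal idempotents; $vc=cv=c$, $vf=fu=f$; $c^*v=vc^*=c^*$, $uf^*=f^*v=f^*$; $c^*c=v$, $f^*f=u$, $c^*f=f^*c=0$; $v=cc^*+ff^*$. It has identity $u+v$ and the involution $(\sum k_ipq^* )^*=\sum k_i^*qp^*$. A unital $*$-ring is $*$-symmetric if $1+xx^*$ is invertible for all $x$. $\mathbb M_n(T)$ carries the $*$-transpose involution $(a_{ij})^*=(a_{ji}^* )$. A Rickart $*$-ring is a $*$-ring in which the right annihilator of each element is generated by a projection ($p=p^2=p^*$); a Rickart ring is one in which left and right annihilators of each element are generated by idempotents. *)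

theory Defs
  imports Main
begin

text \<open>Elements of T are represented by formal K-algebra expressions in the generators
  u, v, c, f, c*, f*, modulo the smallest congruence containing the unital
  K-algebra axioms and the Leavitt path algebra relations of E_T
  (together with the fact that the identity is u + v).\<close>

datatype gen = U | V | C | F | Cs | Fs

datatype 'k lexp =
    Sc 'k
  | G gen
  | Plus "'k lexp" "'k lexp"
  | Neg "'k lexp"
  | Times "'k lexp" "'k lexp"

inductive lpa_eq :: "'k::field lexp \<Rightarrow> 'k lexp \<Rightarrow> bool" (infix "\<approx>" 50) where
  refl: "a \<approx> a"
| sym: "a \<approx> b \<Longrightarrow> b \<approx> a"
| trans: "a \<approx> b \<Longrightarrow> b \<approx> c \<Longrightarrow> a \<approx> c"
| plus_cong: "a \<approx> a' \<Longrightarrow> b \<approx> b' \<Longrightarrow> Plus a b \<approx> Plus a' b'"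
| neg_cong: "a \<approx> a' \<Longrightarrow> Neg a \<approx> Neg a'"
| times_cong: "a \<approx> a' \<Longrightarrow> b \<approx> b' \<Longrightarrow> Times a b \<approx> Times a' b'"
| plus_assoc: "Plus (Plus a b) c \<approx> Plus a (Plus b c)"
| plus_comm: "Plus a b \<approx> Plus b a"
| plus_zero: "Plus a (Sc 0) \<approx> a"
| plus_neg: "Plus a (Neg a) \<approx> Sc 0"
| times_assoc: "Times (Times a b) c \<approx> Times a (Times b c)"
| times_one_l: "Times (Sc 1) a \<approx> a"
| times_one_r: "Times a (Sc 1) \<approx> a"
| distrib_l: "Times a (Plus b c) \<approx> Plus (Times a b) (Times a c)"
| distrib_r: "Times (Plus a b) c \<approx> Plus (Times a c) (Times b c)"
| sc_plus: "Sc (k + l) \<approx> Plus (Sc k) (Sc l)"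
| sc_times: "Sc (k * l) \<approx> Times (Sc k) (Sc l)"
| sc_central: "Times (Sc k) a \<approx> Times a (Sc k)"
| uu: "Times (G U) (G U) \<approx> G U"
| vv: "Times (G V) (G V) \<approx> G V"
| uv: "Times (G U) (G V) \<approx> Sc 0"
| vu: "Times (G V) (G U) \<approx> Sc 0"
| vc: "Times (G V) (G C) \<approx> G C"
| cv: "Times (G C) (G V) \<approx> G C"
| vf: "Times (G V) (G F) \<approx> G F"
| fu: "Times (G F) (G U) \<approx> G F"
| csv: "Times (G Cs) (G V) \<approx> G Cs"
| vcs: "Times (G V) (G Cs) \<approx> G Cs"
| ufs: "Times (G U) (G Fs) \<approx> G Fs"
| fsv: "Times (G Fs) (G V) \<approx> G Fs"
| csc: "Times (G Cs) (G C) \<approx> G V"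
| fsf: "Times (G Fs) (G F) \<approx> G U"
| csf: "Times (G Cs) (G F) \<approx> Sc 0"
| fsc: "Times (G Fs) (G C) \<approx> Sc 0"
| ck: "G V \<approx> Plus (Times (G C) (G Cs)) (Times (G F) (G Fs))"
| unit: "Sc 1 \<approx> Plus (G U) (G V)"

fun lstar :: "('k \<Rightarrow> 'k) \<Rightarrow> 'k lexp \<Rightarrow> 'k lexp" where
  "lstar \<sigma> (Sc k) = Sc (\<sigma> k)"
| "lstar \<sigma> (G U) = G U"
| "lstar \<sigma> (G V) = G V"
| "lstar \<sigma> (G C) = G Cs"
| "lstar \<sigma> (G Cs) = G C"
| "lstar \<sigma> (G F) = G Fs"
| "lstar \<sigma> (G Fs) = G F"
| "lstar \<sigma> (Plus a b) = Plus (lstar \<sigma> a) (lstar \<sigma> b)"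
| "lstar \<sigma> (Neg a) = Neg (lstar \<sigma> a)"
| "lstar \<sigma> (Times a b) = Times (lstar \<sigma> b) (lstar \<sigma> a)"

definition field_involution :: "('k::field \<Rightarrow> 'k) \<Rightarrow> bool" where
  "field_involution \<sigma> \<longleftrightarrow>
     (\<forall>a b. \<sigma> (a + b) = \<sigma> a + \<sigma> b) \<and> (\<forall>a b. \<sigma> (a * b) = \<sigma> a * \<sigma> b) \<and> (\<forall>a. \<sigma> (\<sigma> a) = a)"

definition lpa_invertible :: "'k::field lexp \<Rightarrow> bool" where
  "lpa_invertible x \<longleftrightarrow> (\<exists>y. Times x y \<approx> Sc 1 \<and> Times y x \<approx> Sc 1)"

definition toeplitz_star_symmetric :: "('k::field \<Rightarrow> 'k) \<Rightarrow> bool" where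
  "toeplitz_star_symmetric \<sigma> \<longleftrightarrow>
     (\<forall>x::'k lexp. lpa_invertible (Plus (Sc 1) (Times x (lstar \<sigma> x))))"

text \<open>n x n matrices over T: only entries with indices < n matter.\<close>
type_synonym 'k lmat = "nat \<Rightarrow> nat \<Rightarrow> 'k lexp"

definition lsum :: "'k::field lexp list \<Rightarrow> 'k lexp" where
  "lsum xs = foldr Plus xs (Sc 0)"

definition mat_eq :: "nat \<Rightarrow> 'k::field lmat \<Rightarrow> 'k lmat \<Rightarrow> bool" where
  "mat_eq n A B \<longleftrightarrow> (\<forall>i<n. \<forall>j<n. A i j \<approx> B i j)"

definition mat_mul :: "nat \<Rightarrow> 'k::field lmat \<Rightarrow> 'k lmat \<Rightarrow> 'k lmat" where
  "mat_mul n A B = (\<lambda>i j. lsum (map (\<lambda>k. Times (A i k) (B k j)) [0..<n]))"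

definition mat_zero :: "'k::field lmat" where
  "mat_zero = (\<lambda>i j. Sc 0)"

definition mat_star :: "('k \<Rightarrow> 'k) \<Rightarrow> 'k lmat \<Rightarrow> 'k lmat" where
  "mat_star \<sigma> A = (\<lambda>i j. lstar \<sigma> (A j i))"

definition mat_projection :: "('k::field \<Rightarrow> 'k) \<Rightarrow> nat \<Rightarrow> 'k lmat \<Rightarrow> bool" where
  "mat_projection \<sigma> n P \<longleftrightarrow> mat_eq n (mat_mul n P P) P \<and> mat_eq n (mat_star \<sigma> P) P"

definition mat_rickart_star :: "('k::field \<Rightarrow> 'k) \<Rightarrow> nat \<Rightarrow> bool" where
  "mat_rickart_star \<sigma> n \<longleftrightarrow>
     (\<forall>X::'k lmat. \<exists>P. mat_projection \<sigma> n P \<and>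
        (\<forall>Y. mat_eq n (mat_mul n X Y) mat_zero \<longleftrightarrow> (\<exists>Z. mat_eq n Y (mat_mul n P Z))))"

end

theory Submission
  imports Defs
begin

text \<open>
  T has a representation on \<open>K\<^sup>2\<close> in which \<open>u, f, f*\<close> act as 0, \<open>v\<close> as 1, and \<open>c, c*\<close>
  as a matrix \<open>C\<close> and its inverse. Choosing \<open>C + C\<^sup>-\<^sup>1 = -3\<close> gives
  \<open>(1 + C) (1 + C\<^sup>-\<^sup>1) = -1\<close>, so for \<open>x = 1 + c\<close> the representation kills both \<open>1 + x x*\<close>
  and \<open>1 + x* x\<close>; neither has a one-sided inverse in T, and T is not *-symmetric.

  In \<open>M\<^sub>n(T)\<close>, \<open>n \<ge> 2\<close>, the matrix \<open>W = [[0, -x], [0, 1]]\<close> annihilates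
  \<open>X = [[1, x], [0, 0]]\<close> from the right. If the right annihilator of \<open>X\<close> were \<open>P M\<^sub>n(T)\<close> for a
  projection \<open>P\<close>, then \<open>XP = 0\<close> and \<open>P = P*\<close> give \<open>P\<^sub>1\<^sub>0 = -P\<^sub>1\<^sub>1 x*\<close>, while \<open>PW = W\<close> gives
  \<open>P\<^sub>1\<^sub>1 - P\<^sub>1\<^sub>0 x = 1\<close>; together \<open>P\<^sub>1\<^sub>1 (1 + x* x) = 1\<close>, which the representation rules out.
\<close>

lemma field_involution_add: "field_involution \<sigma> \<Longrightarrow> \<sigma> (a + b) = \<sigma> a + \<sigma> b"
  and field_involution_mult: "field_involution \<sigma> \<Longrightarrow> \<sigma> (a * b) = \<sigma> a * \<sigma> b"
  by (simp_all add: field_involution_def)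

lemma field_involution_0: "field_involution \<sigma> \<Longrightarrow> \<sigma> 0 = 0"
  using field_involution_add[of \<sigma> 0 0] by (metis add.right_neutral add_left_cancel)

lemma field_involution_1:
  assumes "field_involution \<sigma>"
  shows "\<sigma> 1 = 1"
proof -
  have "\<sigma> 1 \<noteq> 0"
    using assms field_involution_0[OF assms] by (metis field_involution_def zero_neq_one)
  moreover have "\<sigma> 1 * \<sigma> 1 = \<sigma> 1"
    using field_involution_mult[OF assms, of 1 1] by simp
  ultimately show ?thesis by simp
qed

definition mat_prod :: "nat \<Rightarrow> (nat \<Rightarrow> nat \<Rightarrow> 'a::semiring_0) \<Rightarrow> (nat \<Rightarrow> nat \<Rightarrow> 'a) \<Rightarrow> nat \<Rightarrow> nat \<Rightarrow> 'a"
  where "mat_prod n A B i j = (\<Sum>k<n. A i k * B k j)"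

lemma mat_prod_assoc: "mat_prod n (mat_prod n A B) D i j = mat_prod n A (mat_prod n B D) i j"
proof -
  have "mat_prod n (mat_prod n A B) D i j = (\<Sum>k<n. \<Sum>l<n. A i l * B l k * D k j)"
    by (simp add: mat_prod_def sum_distrib_right)
  also have "\<dots> = (\<Sum>l<n. \<Sum>k<n. A i l * (B l k * D k j))"
    by (subst sum.swap) (simp add: mult.assoc)
  also have "\<dots> = mat_prod n A (mat_prod n B D) i j"
    by (simp add: mat_prod_def sum_distrib_left)
  finally show ?thesis .
qed

lemma mat_prod_cong_right:
  "(\<And>k. k < n \<Longrightarrow> B k j = B' k j) \<Longrightarrow> mat_prod n A B i j = mat_prod n A B' i j"
  by (simp add: mat_prod_def)

lemma mat_prod_cong_left:
  "(\<And>k. k < n \<Longrightarrow> A i k = A' i k) \<Longrightarrow> mat_prod n A B i j = mat_prod n A' B i j"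
  by (simp add: mat_prod_def)

lemma mat_prod_idempotent_fixes_range:
  assumes idem: "\<And>i j. i < n \<Longrightarrow> j < n \<Longrightarrow> mat_prod n P P i j = P i j"
    and range: "\<And>i j. i < n \<Longrightarrow> j < n \<Longrightarrow> Y i j = mat_prod n P Z i j"
    and "i < n" "j < n"
  shows "mat_prod n P Y i j = Y i j"
proof -
  have "mat_prod n P Y i j = mat_prod n P (mat_prod n P Z) i j"
    using range \<open>j < n\<close> by (intro mat_prod_cong_right) simp
  also have "\<dots> = mat_prod n (mat_prod n P P) Z i j"
    by (simp add: mat_prod_assoc)
  also have "\<dots> = mat_prod n P Z i j"
    using idem \<open>i < n\<close> by (intro mat_prod_cong_left) simp
  also have "\<dots> = Y i j"
    using range assms by simp
  finally show ?thesis .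
qed

lemma mat_prod_two_terms:
  assumes "1 < n" and "\<And>k. 2 \<le> k \<Longrightarrow> A i k * B k j = 0"
  shows "mat_prod n A B i j = A i 0 * B 0 j + A i 1 * B 1 j"
proof -
  have "mat_prod n A B i j = (\<Sum>k\<in>{0, 1}. A i k * B k j)"
    unfolding mat_prod_def by (rule sum.mono_neutral_right) (use assms in auto)
  then show ?thesis by simp
qed

definition rickart_star_matrices :: "('a::ring_1 \<Rightarrow> 'a) \<Rightarrow> nat \<Rightarrow> bool" where
  "rickart_star_matrices star n \<longleftrightarrow> (\<forall>X. \<exists>P.
     (\<forall>i<n. \<forall>j<n. mat_prod n P P i j = P i j \<and> star (P j i) = P i j) \<and>
     (\<forall>Y. (\<forall>i<n. \<forall>j<n. mat_prod n X Y i j = 0) \<longleftrightarrow>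
          (\<exists>Z. \<forall>i<n. \<forall>j<n. Y i j = mat_prod n P Z i j)))"

lemma rickart_star_matrices_left_inverse:
  fixes star :: "'a::ring_1 \<Rightarrow> 'a"
  assumes rickart: "rickart_star_matrices star n" and n: "1 < n"
    and star_add: "\<And>a b. star (a + b) = star a + star b"
    and star_mult: "\<And>a b. star (a * b) = star b * star a"
  shows "\<exists>y. y * (1 + star x * x) = 1"
proof -
  define X :: "nat \<Rightarrow> nat \<Rightarrow> 'a" where
    "X i j = (if i = 0 \<and> j = 0 then 1 else if i = 0 \<and> j = 1 then x else 0)" for i j
  define W :: "nat \<Rightarrow> nat \<Rightarrow> 'a" where
    "W i j = (if i = 0 \<and> j = 1 then - x else if i = 1 \<and> j = 1 then 1 else 0)" for i j
  obtain P where idem: "\<And>i j. i < n \<Longrightarrow> j < n \<Longrightarrow> mat_prod n P P i j = P i j"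
    and selfadjoint: "\<And>i j. i < n \<Longrightarrow> j < n \<Longrightarrow> star (P j i) = P i j"
    and annihilator: "\<And>Y. (\<forall>i<n. \<forall>j<n. mat_prod n X Y i j = 0) \<longleftrightarrow>
          (\<exists>Z. \<forall>i<n. \<forall>j<n. Y i j = mat_prod n P Z i j)"
    using rickart[unfolded rickart_star_matrices_def, THEN spec, of X] by blast
  have "\<exists>Z. \<forall>i<n. \<forall>j<n. P i j = mat_prod n P Z i j"
    using idem by (intro exI[of _ P]) simp
  then have "\<forall>i<n. \<forall>j<n. mat_prod n X P i j = 0"
    by (rule annihilator[THEN iffD2])
  then have "mat_prod n X P 0 1 = 0"
    using n by auto
  moreover have "mat_prod n X P 0 1 = P 0 1 + x * P 1 1"
    using n by (subst mat_prod_two_terms) (simp_all add: X_def)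
  ultimately have "P 0 1 + x * P 1 1 = 0"
    by simp
  then have "star (P 0 1) + star (P 1 1) * star x = 0"
    using star_add star_mult by (metis add_0_right add_left_cancel)
  then have P10: "P 1 0 = - (P 1 1 * star x)"
    using selfadjoint n by (simp add: eq_neg_iff_add_eq_0)
  have "\<forall>i<n. \<forall>j<n. mat_prod n X W i j = 0"
    using n by (subst mat_prod_two_terms) (simp_all add: X_def W_def)
  then obtain Z where "\<forall>i<n. \<forall>j<n. W i j = mat_prod n P Z i j"
    by (blast dest: annihilator[THEN iffD1])
  then have "mat_prod n P W 1 1 = W 1 1"
    using n by (intro mat_prod_idempotent_fixes_range[OF idem]) auto
  moreover have "mat_prod n P W 1 1 = P 1 1 - P 1 0 * x"
    using n by (subst mat_prod_two_terms) (simp_all add: W_def)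
  ultimately have "P 1 1 - P 1 0 * x = 1"
    by (simp add: W_def)
  moreover have "P 1 1 * (1 + star x * x) = P 1 1 - P 1 0 * x"
    unfolding P10 by (simp add: algebra_simps)
  ultimately have "P 1 1 * (1 + star x * x) = 1"
    by simp
  then show ?thesis ..
qed

datatype 'a mat2 = Mat2 'a 'a 'a 'a

instantiation mat2 :: (comm_ring_1) ring_1
begin

definition "0 = Mat2 0 0 0 0"
definition "1 = Mat2 1 0 0 1"
fun plus_mat2 where "Mat2 a b c d + Mat2 a' b' c' d' = Mat2 (a + a') (b + b') (c + c') (d + d')"
fun minus_mat2 where "Mat2 a b c d - Mat2 a' b' c' d' = Mat2 (a - a') (b - b') (c - c') (d - d')"
fun uminus_mat2 where "- Mat2 a b c d = Mat2 (- a) (- b) (- c) (- d)"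
fun times_mat2 where
  "Mat2 a b c d * Mat2 a' b' c' d' =
     Mat2 (a * a' + b * c') (a * b' + b * d') (c * a' + d * c') (c * b' + d * d')"

instance
proof
  fix x y z :: "'a mat2"
  show "x * y * z = x * (y * z)" by (cases x; cases y; cases z) (simp add: algebra_simps)
  show "1 * x = x" by (cases x) (simp add: one_mat2_def)
  show "x * 1 = x" by (cases x) (simp add: one_mat2_def)
  show "(x + y) * z = x * z + y * z" by (cases x; cases y; cases z) (simp add: algebra_simps)
  show "x * (y + z) = x * y + x * z" by (cases x; cases y; cases z) (simp add: algebra_simps)
  show "x + y + z = x + (y + z)" by (cases x; cases y; cases z) (simp add: algebra_simps)
  show "x + y = y + x" by (cases x; cases y) (simp add: algebra_simps)
  show "0 + x = x" by (cases x) (simp add: zero_mat2_def)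
  show "- x + x = 0" by (cases x) (simp add: zero_mat2_def)
  show "x - y = x + - y" by (cases x; cases y) simp
  show "(0::'a mat2) \<noteq> 1" by (simp add: zero_mat2_def one_mat2_def)
qed

end

locale toeplitz_representation =
  fixes scalar :: "'k::field \<Rightarrow> 'a::ring_1" and g :: "gen \<Rightarrow> 'a"
  assumes scalar_add: "scalar (k + l) = scalar k + scalar l"
    and scalar_mult: "scalar (k * l) = scalar k * scalar l"
    and scalar_1: "scalar 1 = 1"
    and scalar_central: "scalar k * a = a * scalar k"
    and relations:
      "g U * g U = g U" "g V * g V = g V" "g U * g V = 0" "g V * g U = 0"
      "g V * g C = g C" "g C * g V = g C" "g V * g F = g F" "g F * g U = g F"
      "g Cs * g V = g Cs" "g V * g Cs = g Cs" "g U * g Fs = g Fs" "g Fs * g V = g Fs"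
      "g Cs * g C = g V" "g Fs * g F = g U" "g Cs * g F = 0" "g Fs * g C = 0"
    and cuntz_krieger: "g V = g C * g Cs + g F * g Fs"
    and vertices_sum: "g U + g V = 1"
begin

primrec eval :: "'k lexp \<Rightarrow> 'a" where
  "eval (Sc k) = scalar k"
| "eval (G x) = g x"
| "eval (Plus a b) = eval a + eval b"
| "eval (Neg a) = - eval a"
| "eval (Times a b) = eval a * eval b"

lemma scalar_0: "scalar 0 = 0"
  using scalar_add[of 0 0] by simp

lemma eval_respects: "a \<approx> b \<Longrightarrow> eval a = eval b"
proof (induction rule: lpa_eq.induct)
  case ck
  show ?case using cuntz_krieger by simp
next
  case unit
  show ?case using vertices_sum scalar_1 by simp
next
  case plus_comm
  show ?case by (simp add: add.commute)
next
  case sc_central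
  show ?case by (simp add: scalar_central)
qed (simp_all add: scalar_add scalar_mult scalar_0 scalar_1 relations
    distrib_left distrib_right mult.assoc add.assoc)

end

text \<open>The companion matrix of \<open>t\<^sup>2 + 3t + 1\<close>, so that \<open>C + C\<^sup>-\<^sup>1 = -3\<close>.\<close>
definition loop_mat2 :: "'a::comm_ring_1 mat2" where "loop_mat2 = Mat2 0 (-1) 1 (-3)"

definition loop_inv_mat2 :: "'a::comm_ring_1 mat2" where "loop_inv_mat2 = Mat2 (-3) 1 (-1) 0"

fun gen_mat2 :: "gen \<Rightarrow> 'a::comm_ring_1 mat2" where
  "gen_mat2 U = 0"
| "gen_mat2 V = 1"
| "gen_mat2 C = loop_mat2"
| "gen_mat2 Cs = loop_inv_mat2"
| "gen_mat2 F = 0"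
| "gen_mat2 Fs = 0"

definition scalar_mat2 :: "'a::comm_ring_1 \<Rightarrow> 'a mat2" where "scalar_mat2 k = Mat2 k 0 0 k"

interpretation mat2_rep: toeplitz_representation "scalar_mat2 :: 'k::field \<Rightarrow> 'k mat2" gen_mat2
proof
  fix k :: 'k and a :: "'k mat2"
  show "scalar_mat2 k * a = a * scalar_mat2 k" by (cases a) (simp add: scalar_mat2_def mult.commute)
qed (simp_all add: scalar_mat2_def loop_mat2_def loop_inv_mat2_def zero_mat2_def one_mat2_def)

lemma lpa_eq_lstar:
  assumes inv: "field_involution \<sigma>" and "a \<approx> b"
  shows "lstar \<sigma> a \<approx> lstar \<sigma> b"
  using \<open>a \<approx> b\<close>
proof (induction rule: lpa_eq.induct)
  case (sc_times k l)
  have "Sc (\<sigma> (k * l)) \<approx> Times (Sc (\<sigma> l)) (Sc (\<sigma> k))"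
    using lpa_eq.sc_times[of "\<sigma> l" "\<sigma> k"] by (simp add: field_involution_mult[OF inv] mult.commute)
  then show ?case by simp
qed (auto simp: field_involution_add[OF inv] field_involution_0[OF inv] field_involution_1[OF inv]
    intro: lpa_eq.intros)

quotient_type (overloaded) 'k toeplitz = "'k::field lexp" / lpa_eq
  by (rule equivpI) (auto simp: reflp_def symp_def transp_def intro: lpa_eq.intros)

lemma Sc_0_not_lpa_eq_Sc_1: "\<not> Sc 0 \<approx> (Sc 1 :: 'k::field lexp)"
proof
  assume "Sc 0 \<approx> (Sc 1 :: 'k lexp)"
  then have "scalar_mat2 0 = (scalar_mat2 1 :: 'k mat2)"
    using mat2_rep.eval_respects by fastforce
  then show False by (simp add: scalar_mat2_def)
qed

instantiation toeplitz :: (field) ring_1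
begin

lift_definition zero_toeplitz :: "'a toeplitz" is "Sc 0 :: 'a lexp" .
lift_definition one_toeplitz :: "'a toeplitz" is "Sc 1 :: 'a lexp" .
lift_definition plus_toeplitz :: "'a toeplitz \<Rightarrow> 'a toeplitz \<Rightarrow> 'a toeplitz" is Plus
  by (rule lpa_eq.plus_cong)
lift_definition uminus_toeplitz :: "'a toeplitz \<Rightarrow> 'a toeplitz" is Neg
  by (rule lpa_eq.neg_cong)
lift_definition minus_toeplitz :: "'a toeplitz \<Rightarrow> 'a toeplitz \<Rightarrow> 'a toeplitz"
  is "\<lambda>a b. Plus a (Neg b)"
  by (intro lpa_eq.plus_cong lpa_eq.neg_cong)
lift_definition times_toeplitz :: "'a toeplitz \<Rightarrow> 'a toeplitz \<Rightarrow> 'a toeplitz" is Times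
  by (rule lpa_eq.times_cong)

instance
proof
  fix x y z :: "'a toeplitz"
  show "x * y * z = x * (y * z)" by transfer (rule lpa_eq.times_assoc)
  show "1 * x = x" by transfer (rule lpa_eq.times_one_l)
  show "x * 1 = x" by transfer (rule lpa_eq.times_one_r)
  show "(x + y) * z = x * z + y * z" by transfer (rule lpa_eq.distrib_r)
  show "x * (y + z) = x * y + x * z" by transfer (rule lpa_eq.distrib_l)
  show "x + y + z = x + (y + z)" by transfer (rule lpa_eq.plus_assoc)
  show "x + y = y + x" by transfer (rule lpa_eq.plus_comm)
  show "0 + x = x" by transfer (meson lpa_eq.plus_comm lpa_eq.plus_zero lpa_eq.trans)
  show "- x + x = 0" by transfer (meson lpa_eq.plus_comm lpa_eq.plus_neg lpa_eq.trans)
  show "x - y = x + - y" by transfer (rule lpa_eq.refl)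
  show "(0::'a toeplitz) \<noteq> 1" by transfer (rule Sc_0_not_lpa_eq_Sc_1)
qed

end

lift_definition toeplitz_gen :: "gen \<Rightarrow> 'k::field toeplitz" is "G :: gen \<Rightarrow> 'k lexp" .

lift_definition toeplitz_to_mat2 :: "'k::field toeplitz \<Rightarrow> 'k mat2" is mat2_rep.eval
  by (rule mat2_rep.eval_respects)

lemma toeplitz_to_mat2_simps [simp]:
  "toeplitz_to_mat2 0 = 0" "toeplitz_to_mat2 1 = 1" "toeplitz_to_mat2 (toeplitz_gen g) = gen_mat2 g"
  "toeplitz_to_mat2 (x + y) = toeplitz_to_mat2 x + toeplitz_to_mat2 y"
  "toeplitz_to_mat2 (x * y) = toeplitz_to_mat2 x * toeplitz_to_mat2 y"
  by (transfer; simp add: scalar_mat2_def zero_mat2_def one_mat2_def)+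

definition toeplitz_star :: "('k::field \<Rightarrow> 'k) \<Rightarrow> 'k toeplitz \<Rightarrow> 'k toeplitz" where
  "toeplitz_star \<sigma> x = abs_toeplitz (lstar \<sigma> (rep_toeplitz x))"

lemma toeplitz_star_abs:
  assumes "field_involution \<sigma>"
  shows "toeplitz_star \<sigma> (abs_toeplitz a) = abs_toeplitz (lstar \<sigma> a)"
  unfolding toeplitz_star_def toeplitz.abs_eq_iff
  by (rule lpa_eq_lstar[OF assms Quotient3_rep_abs[OF Quotient3_toeplitz lpa_eq.refl]])

lemma toeplitz_star_add:
  "field_involution \<sigma> \<Longrightarrow> toeplitz_star \<sigma> (x + y) = toeplitz_star \<sigma> x + toeplitz_star \<sigma> y"
  by (induction x rule: toeplitz.abs_induct, induction y rule: toeplitz.abs_induct)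
    (simp add: toeplitz_star_abs plus_toeplitz.abs_eq)

lemma toeplitz_star_mult:
  "field_involution \<sigma> \<Longrightarrow> toeplitz_star \<sigma> (x * y) = toeplitz_star \<sigma> y * toeplitz_star \<sigma> x"
  by (induction x rule: toeplitz.abs_induct, induction y rule: toeplitz.abs_induct)
    (simp add: toeplitz_star_abs times_toeplitz.abs_eq)

lemma toeplitz_star_1_plus_loop:
  fixes \<sigma> :: "'k::field \<Rightarrow> 'k"
  assumes "field_involution \<sigma>"
  shows "toeplitz_star \<sigma> (1 + toeplitz_gen C) = 1 + toeplitz_gen Cs"
  by (simp add: toeplitz_star_abs[OF assms] one_toeplitz.abs_eq toeplitz_gen.abs_eq
      plus_toeplitz.abs_eq field_involution_1[OF assms])

lemma toeplitz_to_mat2_1_plus_loop_star: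
  fixes \<sigma> :: "'k::field \<Rightarrow> 'k"
  assumes inv: "field_involution \<sigma>"
  defines "x \<equiv> 1 + toeplitz_gen C"
  shows "toeplitz_to_mat2 (1 + x * toeplitz_star \<sigma> x) = 0"
    and "toeplitz_to_mat2 (1 + toeplitz_star \<sigma> x * x) = 0"
  by (simp_all add: x_def toeplitz_star_1_plus_loop[OF inv] loop_mat2_def loop_inv_mat2_def
      zero_mat2_def one_mat2_def)

lemma toeplitz_to_mat2_0_not_invertible:
  assumes "toeplitz_to_mat2 z = 0"
  shows "y * z \<noteq> 1" and "z * y \<noteq> 1"
  using assms toeplitz_to_mat2_simps(2,5) by (metis mult_zero_left mult_zero_right zero_neq_one)+

lemma not_toeplitz_star_symmetric:
  fixes \<sigma> :: "'k::field \<Rightarrow> 'k"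
  assumes "field_involution \<sigma>"
  shows "\<not> toeplitz_star_symmetric \<sigma>"
proof
  let ?x = "Plus (Sc 1) (G C) :: 'k lexp"
  assume "toeplitz_star_symmetric \<sigma>"
  then obtain y where "Times (Plus (Sc 1) (Times ?x (lstar \<sigma> ?x))) y \<approx> Sc 1"
    unfolding toeplitz_star_symmetric_def lpa_invertible_def by blast
  then have "(1 + abs_toeplitz ?x * toeplitz_star \<sigma> (abs_toeplitz ?x)) * abs_toeplitz y = 1"
    by (simp add: toeplitz.abs_eq_iff[symmetric] toeplitz_star_abs[OF assms]
        one_toeplitz.abs_eq plus_toeplitz.abs_eq times_toeplitz.abs_eq)
  moreover have "abs_toeplitz ?x = 1 + toeplitz_gen C"
    by (simp add: one_toeplitz.abs_eq toeplitz_gen.abs_eq plus_toeplitz.abs_eq)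
  ultimately show False
    using toeplitz_to_mat2_0_not_invertible(2) toeplitz_to_mat2_1_plus_loop_star(1)[OF assms] by metis
qed

lemma abs_toeplitz_lsum: "abs_toeplitz (lsum xs) = sum_list (map abs_toeplitz xs)"
  by (induction xs) (simp_all add: lsum_def zero_toeplitz.abs_eq plus_toeplitz.abs_eq[symmetric])

definition toeplitz_mat :: "'k::field lmat \<Rightarrow> nat \<Rightarrow> nat \<Rightarrow> 'k toeplitz" where
  "toeplitz_mat A i j = abs_toeplitz (A i j)"

lemma toeplitz_mat_mat_mul:
  "toeplitz_mat (mat_mul n A B) i j = mat_prod n (toeplitz_mat A) (toeplitz_mat B) i j"
  by (simp add: toeplitz_mat_def mat_mul_def mat_prod_def abs_toeplitz_lsum
      times_toeplitz.abs_eq[symmetric] comp_def atLeast0LessThan flip: sum_set_upt_conv_sum_list_nat)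

lemma mat_eq_iff_toeplitz_mat:
  "mat_eq n A B \<longleftrightarrow> (\<forall>i<n. \<forall>j<n. toeplitz_mat A i j = toeplitz_mat B i j)"
  by (simp add: mat_eq_def toeplitz_mat_def toeplitz.abs_eq_iff)

lemma rickart_star_matrices_toeplitz:
  fixes \<sigma> :: "'k::field \<Rightarrow> 'k"
  assumes inv: "field_involution \<sigma>" and rickart: "mat_rickart_star \<sigma> n"
  shows "rickart_star_matrices (toeplitz_star \<sigma>) n"
  unfolding rickart_star_matrices_def
proof
  fix X :: "nat \<Rightarrow> nat \<Rightarrow> 'k toeplitz"
  define rep_mat :: "(nat \<Rightarrow> nat \<Rightarrow> 'k toeplitz) \<Rightarrow> 'k lmat" where
    "rep_mat A i j = rep_toeplitz (A i j)" for A i j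
  have toeplitz_mat_rep: "toeplitz_mat (rep_mat A) = A" for A
    by (simp add: toeplitz_mat_def rep_mat_def fun_eq_iff Quotient3_abs_rep[OF Quotient3_toeplitz])
  have mat_eq_mul: "mat_eq n C (mat_mul n A B) \<longleftrightarrow>
      (\<forall>i<n. \<forall>j<n. toeplitz_mat C i j = mat_prod n (toeplitz_mat A) (toeplitz_mat B) i j)" for A B C
    by (simp add: mat_eq_iff_toeplitz_mat toeplitz_mat_mat_mul)
  obtain P where projection: "mat_projection \<sigma> n P"
    and ann: "\<And>Y. mat_eq n (mat_mul n (rep_mat X) Y) mat_zero \<longleftrightarrow> (\<exists>Z. mat_eq n Y (mat_mul n P Z))"
    using rickart unfolding mat_rickart_star_def by blast
  have "\<forall>i<n. \<forall>j<n. mat_prod n (toeplitz_mat P) (toeplitz_mat P) i j = toeplitz_mat P i j \<and>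
      toeplitz_star \<sigma> (toeplitz_mat P j i) = toeplitz_mat P i j"
    using projection
    by (simp add: mat_projection_def mat_eq_iff_toeplitz_mat toeplitz_mat_mat_mul mat_star_def)
      (simp add: toeplitz_mat_def toeplitz_star_abs[OF inv])
  moreover have "(\<forall>i<n. \<forall>j<n. mat_prod n X Y i j = 0) \<longleftrightarrow>
      (\<exists>Z. \<forall>i<n. \<forall>j<n. Y i j = mat_prod n (toeplitz_mat P) Z i j)" for Y
  proof -
    have "(\<forall>i<n. \<forall>j<n. mat_prod n X Y i j = 0) \<longleftrightarrow>
        mat_eq n (mat_mul n (rep_mat X) (rep_mat Y)) mat_zero"
      by (simp add: mat_eq_iff_toeplitz_mat toeplitz_mat_mat_mul toeplitz_mat_rep)
        (simp add: toeplitz_mat_def mat_zero_def zero_toeplitz.abs_eq[symmetric])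
    also have "\<dots> \<longleftrightarrow> (\<exists>Z. \<forall>i<n. \<forall>j<n. Y i j = mat_prod n (toeplitz_mat P) (toeplitz_mat Z) i j)"
      by (simp add: ann mat_eq_mul toeplitz_mat_rep)
    also have "\<dots> \<longleftrightarrow> (\<exists>Z. \<forall>i<n. \<forall>j<n. Y i j = mat_prod n (toeplitz_mat P) Z i j)"
      by (metis toeplitz_mat_rep)
    finally show ?thesis .
  qed
  ultimately show "\<exists>P. (\<forall>i<n. \<forall>j<n. mat_prod n P P i j = P i j \<and> toeplitz_star \<sigma> (P j i) = P i j) \<and>
      (\<forall>Y. (\<forall>i<n. \<forall>j<n. mat_prod n X Y i j = 0) \<longleftrightarrow>
          (\<exists>Z. \<forall>i<n. \<forall>j<n. Y i j = mat_prod n P Z i j))"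
    by blast
qed

theorem mainTheorem19:
  fixes \<sigma> :: "'k::field \<Rightarrow> 'k"
  assumes "field_involution \<sigma>"
  shows "\<not> toeplitz_star_symmetric \<sigma> \<and> (\<forall>n::nat. n > 1 \<longrightarrow> \<not> mat_rickart_star \<sigma> n)"
proof (intro conjI allI impI)
  show "\<not> toeplitz_star_symmetric \<sigma>"
    using not_toeplitz_star_symmetric[OF assms] .
next
  fix n :: nat
  assume "1 < n"
  let ?x = "1 + toeplitz_gen C :: 'k toeplitz"
  show "\<not> mat_rickart_star \<sigma> n"
  proof
    assume "mat_rickart_star \<sigma> n"
    then have "rickart_star_matrices (toeplitz_star \<sigma>) n"
      by (rule rickart_star_matrices_toeplitz[OF assms])
    then obtain y where "y * (1 + toeplitz_star \<sigma> ?x * ?x) = 1"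
      using \<open>1 < n\<close> rickart_star_matrices_left_inverse toeplitz_star_add[OF assms]
        toeplitz_star_mult[OF assms] by blast
    then show False
      using toeplitz_to_mat2_0_not_invertible(1) toeplitz_to_mat2_1_plus_loop_star(2)[OF assms]
      by blast
  qed
qed

end
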